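(* Let $\mathscr{P}_1$ and $\mathscr{P}_2$ be two positions of impartial combinatorial games played under the normal play convention, and consider their sum $\mathscr{P}_1+\mathscr{P}_2$ (independent components, a move consists of a move in exactly one component). Suppose a solution tree $S$ for $\mathscr{P}_1+\mathscr{P}_2$ has been computed, i.e. the outcome of every node of $S$ is known. Then, using only the nodes of $S$ and their outcomes, without computing the outcome of any other node, one can determine the nimber of one of the two components $\mathscr{P}_1$, $\mathscr{P}_2$, and whether the nimber of the other component is equal to it or different from it.
   Context: An impartial combinatorial game: two players move alternately with perfect information and no chance, and the same moves are available to both players from every position; under the normal play convention the player who cannot move loses. An option of a position $\mathscr{P}$ is a position reachable from $\mathscr{P}$ in one move. The outcome of a position is W (winning) if the player to move has a winning strategy and L (losing) otherwise: terminal positions are L, a position is W iff it has at least one option that is L, and L iff all its options are W. The sum $\mathscr{P}_1+\mathscr{P}_2$ is the position whose options are $\mathscr{P}_1'+\mathscr{P}_2$ for $\mathscr{P}_1'$ an option of $\mathscr{P}_1$ and $\mathscr{P}_1+\mathscr{P}_2'$ for $\mathscr{P}_2'$ an option of $\mathscr{P}_2$. A solution tree for a position $\mathscr{Q}$ is a subset $S$ of the nodes of the game tree of $\mathscr{Q}$ (the positions reachable from $\mathscr{Q}$, with edges from a position to its options), containing $\mathscr{Q}$, together with the outcomes of its nodes, such that every losing node of $S$ has all its options in $S$ and every winning node of $S$ has at least one losing option in $S$. The nimber of a position is defined recursively as the Mex (least non-negative integer not in the set) of the nimbers of its options; terminal positions have nimber $0$. By the Sprague–Grundy theory, $\mathscr{P}_1+\mathscr{P}_2$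 is losing iff the nimbers of $\mathscr{P}_1$ and $\mathscr{P}_2$ are equal. *)

theory Defs
  imports Main
begin

text \<open>An impartial game is given by an option function opt: opt x is the set of
  positions reachable from x in one move.\<close>

definition mex :: "nat set \<Rightarrow> nat" where
  "mex A = (LEAST n. n \<notin> A)"

inductive win :: "('a \<Rightarrow> 'a set) \<Rightarrow> 'a \<Rightarrow> bool"
  and lose :: "('a \<Rightarrow> 'a set) \<Rightarrow> 'a \<Rightarrow> bool"
  for opt :: "'a \<Rightarrow> 'a set" where
  lose_intro: "(\<forall>y\<in>opt x. win opt y) \<Longrightarrow> lose opt x"
| win_intro: "y \<in> opt x \<Longrightarrow> lose opt y \<Longrightarrow> win opt x"

inductive is_nimber :: "('a \<Rightarrow> 'a set) \<Rightarrow> 'a \<Rightarrow> nat \<Rightarrow> bool"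
  for opt :: "'a \<Rightarrow> 'a set" where
  "(\<forall>y\<in>opt x. is_nimber opt y (g y)) \<Longrightarrow> is_nimber opt x (mex (g ` opt x))"

definition nimber :: "('a \<Rightarrow> 'a set) \<Rightarrow> 'a \<Rightarrow> nat" where
  "nimber opt x = (THE n. is_nimber opt x n)"

text \<open>A position p is a (finite) game position: no infinite play starts at p and
  every position reachable from p has finitely many options.\<close>
definition game_pos :: "('a \<Rightarrow> 'a set) \<Rightarrow> 'a \<Rightarrow> bool" where
  "game_pos opt p \<longleftrightarrow> p \<in> Wellfounded.acc {(y, x). y \<in> opt x}
     \<and> (\<forall>q. (p, q) \<in> {(x, y). y \<in> opt x}\<^sup>* \<longrightarrow> finite (opt q))"

definition sum_opt :: "('a \<Rightarrow> 'a set) \<Rightarrow> ('b \<Rightarrow> 'b set) \<Rightarrow> 'a \<times> 'b \<Rightarrow> ('a \<times> 'b) set" where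
  "sum_opt opt1 opt2 z = {(x', snd z) | x'. x' \<in> opt1 (fst z)} \<union> {(fst z, y') | y'. y' \<in> opt2 (snd z)}"

text \<open>Solution tree S for position Q (w.r.t. option function opt), with outcome
  labelling out (True = W, False = L) giving the true outcomes of the nodes of S.\<close>
definition solution_tree :: "('a \<Rightarrow> 'a set) \<Rightarrow> 'a \<Rightarrow> 'a set \<Rightarrow> ('a \<Rightarrow> bool) \<Rightarrow> bool" where
  "solution_tree opt Q S out \<longleftrightarrow>
     Q \<in> S
   \<and> S \<subseteq> {z. (Q, z) \<in> {(a, b). b \<in> opt a}\<^sup>*}
   \<and> (\<forall>z\<in>S. (out z \<longrightarrow> win opt z) \<and> (\<not> out z \<longrightarrow> lose opt z))
   \<and> (\<forall>z\<in>S. \<not> out z \<longrightarrow> opt z \<subseteq> S)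
   \<and> (\<forall>z\<in>S. out z \<longrightarrow> (\<exists>z'\<in>opt z \<inter> S. \<not> out z'))"

end

theory Submission
  imports Defs
begin

text \<open>By Sprague-Grundy, a node (x, y) of the solution tree is losing iff x and y have
  equal nimbers. An answer at a node (the nimber of one component, and whether the other one
  equals it) is computed bottom-up on the tree. At a winning node the tree exhibits a losing
  option; it shares one component with the node and has equal nimbers, so its answer gives the
  nimber of that shared component. At a losing node all options are in the tree: either some
  move in the first component already yields the nimber of y, or the answers of these moves give
  the nimbers of all options of x, whose mex is the nimber of x.\<close>

lemma game_pos_option:
  assumes "game_pos opt x" "x' \<in> opt x"
  shows "game_pos opt x'"
proof -
  have "x' \<in> Wellfounded.acc {(y, x). y \<in> opt x}"
    using assms by (auto simp: game_pos_def intro: acc_downward)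
  moreover have "finite (opt q)" if "(x', q) \<in> {(x, y). y \<in> opt x}\<^sup>*" for q
  proof -
    from that assms(2) have "(x, q) \<in> {(x, y). y \<in> opt x}\<^sup>*"
      by (auto intro: converse_rtrancl_into_rtrancl)
    with assms(1) show ?thesis by (auto simp: game_pos_def)
  qed
  ultimately show ?thesis by (simp add: game_pos_def)
qed

lemma game_pos_finite_opt: "game_pos opt x \<Longrightarrow> finite (opt x)"
  by (auto simp: game_pos_def)

lemma game_pos_induct [consumes 1, case_names step]:
  assumes "game_pos opt x"
    and "\<And>x. game_pos opt x \<Longrightarrow> (\<And>x'. x' \<in> opt x \<Longrightarrow> P x') \<Longrightarrow> P x"
  shows "P x"
proof -
  have "x \<in> Wellfounded.acc {(y, x). y \<in> opt x}"
    using assms(1) by (simp add: game_pos_def)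
  then have "game_pos opt x \<longrightarrow> P x"
    by (induction rule: acc_induct_rule) (auto intro: assms(2) game_pos_option)
  with assms(1) show ?thesis by blast
qed

lemma game_pos_pair_induct [consumes 2, case_names step]:
  assumes "game_pos opt1 x" "game_pos opt2 y"
    and "\<And>x y. game_pos opt1 x \<Longrightarrow> game_pos opt2 y \<Longrightarrow>
           (\<And>x'. x' \<in> opt1 x \<Longrightarrow> P x' y) \<Longrightarrow> (\<And>y'. y' \<in> opt2 y \<Longrightarrow> P x y') \<Longrightarrow> P x y"
  shows "P x y"
proof -
  from assms(1) have "\<forall>y. game_pos opt2 y \<longrightarrow> P x y"
  proof (induction rule: game_pos_induct)
    case (step x)
    show ?case
    proof (intro allI impI)
      fix y assume "game_pos opt2 y"
      then show "P x y"
        by (induction rule: game_pos_induct) (use step assms(3) in blast)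
    qed
  qed
  with assms(2) show ?thesis by blast
qed

lemma game_pos_notin_opt: "game_pos opt x \<Longrightarrow> x \<notin> opt x"
  by (induction rule: game_pos_induct) blast

lemma mex_notin: "finite A \<Longrightarrow> mex A \<notin> A"
  unfolding mex_def by (rule LeastI_ex) (meson ex_new_if_finite infinite_UNIV_nat)

lemma less_mex_in: "k < mex A \<Longrightarrow> k \<in> A"
  unfolding mex_def using not_less_Least by blast

lemma is_nimber_unique:
  "x \<in> Wellfounded.acc {(y, x). y \<in> opt x} \<Longrightarrow> is_nimber opt x n \<Longrightarrow> is_nimber opt x m \<Longrightarrow> n = m"
proof (induction x arbitrary: n m rule: acc_induct_rule)
  case (1 x)
  from \<open>is_nimber opt x n\<close> obtain g
    where g: "\<forall>y\<in>opt x. is_nimber opt y (g y)" "n = mex (g ` opt x)"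
    by (cases rule: is_nimber.cases) auto
  from \<open>is_nimber opt x m\<close> obtain h
    where h: "\<forall>y\<in>opt x. is_nimber opt y (h y)" "m = mex (h ` opt x)"
    by (cases rule: is_nimber.cases) auto
  from 1 g h have "g ` opt x = h ` opt x"
    by (intro image_cong) auto
  with g h show ?case by simp
qed

lemma nimber_eq_mex:
  assumes "game_pos opt x"
  shows "nimber opt x = mex (nimber opt ` opt x)"
proof -
  from assms have "is_nimber opt x (nimber opt x) \<and> nimber opt x = mex (nimber opt ` opt x)"
  proof (induction rule: game_pos_induct)
    case (step x)
    then have "\<forall>y\<in>opt x. is_nimber opt y (nimber opt y)" by blast
    then have mex: "is_nimber opt x (mex (nimber opt ` opt x))"
      by (rule is_nimber.intros)
    from step(1) have "x \<in> Wellfounded.acc {(y, x). y \<in> opt x}"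
      by (simp add: game_pos_def)
    with mex have "nimber opt x = mex (nimber opt ` opt x)"
      unfolding nimber_def by (blast intro: the_equality is_nimber_unique)
    with mex show ?case by simp
  qed
  then show ?thesis ..
qed

lemma Pair_in_sum_opt_iff:
  "(a, b) \<in> sum_opt opt1 opt2 (x, y) \<longleftrightarrow> (a \<in> opt1 x \<and> b = y) \<or> (a = x \<and> b \<in> opt2 y)"
  by (auto simp: sum_opt_def)

lemma game_pos_sum_reachable:
  assumes "game_pos opt1 x" "game_pos opt2 y"
    and "((x, y), z) \<in> {(a, b). b \<in> sum_opt opt1 opt2 a}\<^sup>*"
  shows "game_pos opt1 (fst z) \<and> game_pos opt2 (snd z)"
  using assms(3)
proof (induction rule: rtrancl_induct)
  case base
  with assms(1,2) show ?case by simp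
next
  case (step z w)
  then show ?case
    by (cases z; cases w) (auto simp: Pair_in_sum_opt_iff intro: game_pos_option)
qed

theorem sum_outcome_nimber:
  assumes "game_pos opt1 x" "game_pos opt2 y"
  shows "(win (sum_opt opt1 opt2) (x, y) \<longrightarrow> nimber opt1 x \<noteq> nimber opt2 y)
       \<and> (lose (sum_opt opt1 opt2) (x, y) \<longrightarrow> nimber opt1 x = nimber opt2 y)"
  using assms
proof (induction rule: game_pos_pair_induct)
  case (step x y)
  let ?sum = "sum_opt opt1 opt2"
  have nx: "nimber opt1 x = mex (nimber opt1 ` opt1 x)"
    and ny: "nimber opt2 y = mex (nimber opt2 ` opt2 y)"
    using step(1,2) by (simp_all add: nimber_eq_mex)
  have nx_new: "nimber opt1 x \<notin> nimber opt1 ` opt1 x"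
    and ny_new: "nimber opt2 y \<notin> nimber opt2 ` opt2 y"
    using nx ny mex_notin game_pos_finite_opt[OF step(1)] game_pos_finite_opt[OF step(2)]
    by (metis finite_imageI)+
  have "\<not> win ?sum (x, y)" if eq: "nimber opt1 x = nimber opt2 y"
  proof
    assume "win ?sum (x, y)"
    then obtain a b where ab: "(a, b) \<in> ?sum (x, y)" "lose ?sum (a, b)"
      by (cases rule: win.cases) auto
    then consider "a \<in> opt1 x" "b = y" | "a = x" "b \<in> opt2 y"
      by (auto simp: Pair_in_sum_opt_iff)
    then show False
    proof cases
      case 1
      with ab step(3) have "nimber opt1 a = nimber opt2 y" by simp
      with 1 eq nx_new show False by (metis image_eqI)
    next
      case 2
      with ab step(4) have "nimber opt1 x = nimber opt2 b" by simp
      with 2 eq ny_new show False by (metis image_eqI)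
    qed
  qed
  moreover have "\<not> lose ?sum (x, y)" if neq: "nimber opt1 x \<noteq> nimber opt2 y"
  proof
    assume "lose ?sum (x, y)"
    then have all_win: "\<forall>z\<in>?sum (x, y). win ?sum z"
      by (cases rule: lose.cases) auto
    consider "nimber opt2 y < nimber opt1 x" | "nimber opt1 x < nimber opt2 y"
      using neq by linarith
    then show False
    proof cases
      case 1
      with nx obtain x' where "x' \<in> opt1 x" "nimber opt1 x' = nimber opt2 y"
        by (metis imageE less_mex_in)
      with all_win step(3) show False by (simp add: Pair_in_sum_opt_iff)
    next
      case 2
      with ny obtain y' where "y' \<in> opt2 y" "nimber opt2 y' = nimber opt1 x"
        by (metis imageE less_mex_in)
      with all_win step(4) show False by (metis Pair_in_sum_opt_iff)
    qed
  qed
  ultimately show ?case by blast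
qed

text \<open>An answer (first, n, same) asserts that the nimber of the first component (if first)
  or of the second one is n, and that the nimber of the other component equals n iff same.\<close>

inductive tree_answer ::
  "('a \<times> 'b \<Rightarrow> bool) \<Rightarrow> ('a \<times> 'b \<Rightarrow> ('a \<times> 'b) set) \<Rightarrow> 'a \<times> 'b \<Rightarrow> bool \<times> nat \<times> bool \<Rightarrow> bool"
  for is_win :: "'a \<times> 'b \<Rightarrow> bool" and edges :: "'a \<times> 'b \<Rightarrow> ('a \<times> 'b) set" where
  lose_second:
    "\<not> is_win (x, y) \<Longrightarrow> (x', y) \<in> edges (x, y) \<Longrightarrow> tree_answer is_win edges (x', y) (False, n, s)
     \<Longrightarrow> tree_answer is_win edges (x, y) (False, n, True)"
| lose_first:
    "\<not> is_win (x, y) \<Longrightarrow>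
     (\<forall>x'. (x', y) \<in> edges (x, y) \<longrightarrow> (\<exists>s. tree_answer is_win edges (x', y) (True, f x', s)))
     \<Longrightarrow> tree_answer is_win edges (x, y) (True, mex (f ` {x'. (x', y) \<in> edges (x, y)}), True)"
| win_move_first:
    "is_win (x, y) \<Longrightarrow> (x', y) \<in> edges (x, y) \<Longrightarrow> \<not> is_win (x', y)
     \<Longrightarrow> tree_answer is_win edges (x', y) (b, n, s)
     \<Longrightarrow> tree_answer is_win edges (x, y) (False, n, False)"
| win_move_second:
    "is_win (x, y) \<Longrightarrow> (x, y') \<in> edges (x, y) \<Longrightarrow> \<not> is_win (x, y')
     \<Longrightarrow> tree_answer is_win edges (x, y') (b, n, s)
     \<Longrightarrow> tree_answer is_win edges (x, y) (True, n, False)"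

definition answer_correct ::
  "('a \<Rightarrow> 'a set) \<Rightarrow> ('b \<Rightarrow> 'b set) \<Rightarrow> 'a \<times> 'b \<Rightarrow> bool \<times> nat \<times> bool \<Rightarrow> bool" where
  "answer_correct opt1 opt2 z a = (case a of (first, n, same) \<Rightarrow>
     (if first then nimber opt1 (fst z) = n \<and> (nimber opt2 (snd z) = n \<longleftrightarrow> same)
      else nimber opt2 (snd z) = n \<and> (nimber opt1 (fst z) = n \<longleftrightarrow> same)))"

locale solved_sum =
  fixes opt1 :: "'a \<Rightarrow> 'a set" and opt2 :: "'b \<Rightarrow> 'b set"
    and P1 :: 'a and P2 :: 'b and S :: "('a \<times> 'b) set" and out :: "'a \<times> 'b \<Rightarrow> bool"
  assumes game_pos1: "game_pos opt1 P1" and game_pos2: "game_pos opt2 P2"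
    and solution: "solution_tree (sum_opt opt1 opt2) (P1, P2) S out"
begin

abbreviation is_win :: "'a \<times> 'b \<Rightarrow> bool" where
  "is_win z \<equiv> z \<in> S \<and> out z"

abbreviation edges :: "'a \<times> 'b \<Rightarrow> ('a \<times> 'b) set" where
  "edges z \<equiv> if z \<in> S then sum_opt opt1 opt2 z \<inter> S else {}"

lemma root_in_tree: "(P1, P2) \<in> S"
  using solution by (simp add: solution_tree_def)

lemma node_game_pos: "(x, y) \<in> S \<Longrightarrow> game_pos opt1 x \<and> game_pos opt2 y"
  using solution game_pos_sum_reachable[OF game_pos1 game_pos2, of "(x, y)"]
  by (auto simp: solution_tree_def)

lemma losing_node_opts: "z \<in> S \<Longrightarrow> \<not> out z \<Longrightarrow> sum_opt opt1 opt2 z \<subseteq> S"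
  using solution by (simp add: solution_tree_def)

lemma winning_node_move: "z \<in> S \<Longrightarrow> out z \<Longrightarrow> \<exists>z'\<in>sum_opt opt1 opt2 z \<inter> S. \<not> out z'"
  using solution by (simp add: solution_tree_def)

lemma node_out_iff: "(x, y) \<in> S \<Longrightarrow> out (x, y) \<longleftrightarrow> nimber opt1 x \<noteq> nimber opt2 y"
  using solution node_game_pos[of x y] sum_outcome_nimber[of opt1 x opt2 y]
  by (auto simp: solution_tree_def)

lemma losing_node_first_edges:
  assumes "(x, y) \<in> S" "\<not> out (x, y)"
  shows "{x'. (x', y) \<in> edges (x, y)} = opt1 x"
proof -
  have "y \<notin> opt2 y"
    using node_game_pos[OF assms(1)] by (simp add: game_pos_notin_opt)
  then have "(x', y) \<in> sum_opt opt1 opt2 (x, y) \<longleftrightarrow> x' \<in> opt1 x" for x'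
    by (auto simp: Pair_in_sum_opt_iff)
  moreover have "edges (x, y) = sum_opt opt1 opt2 (x, y)"
    using assms(1) losing_node_opts[OF assms] by (simp add: Int_absorb2)
  ultimately show ?thesis
    by simp
qed

lemma tree_answer_correct:
  "tree_answer is_win edges z a \<Longrightarrow> z \<in> S \<Longrightarrow> answer_correct opt1 opt2 z a"
proof (induction rule: tree_answer.induct)
  case (lose_second x y x' n s)
  from lose_second.hyps(2) lose_second.prems have "(x', y) \<in> S"
    by (simp split: if_splits)
  moreover from lose_second.hyps(1) lose_second.prems have "nimber opt1 x = nimber opt2 y"
    by (simp add: node_out_iff)
  ultimately show ?case
    using lose_second.IH by (simp add: answer_correct_def)
next
  case (lose_first x y f)
  have "\<not> out (x, y)"
    using lose_first by simp
  then have first_edges: "{x'. (x', y) \<in> edges (x, y)} = opt1 x"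
    by (rule losing_node_first_edges[OF lose_first.prems])
  have "f x' = nimber opt1 x'" if "x' \<in> opt1 x" for x'
  proof -
    from that first_edges have "(x', y) \<in> edges (x, y)" by blast
    with lose_first.IH obtain s where "answer_correct opt1 opt2 (x', y) (True, f x', s)"
      by (auto split: if_splits)
    then show ?thesis by (simp add: answer_correct_def)
  qed
  then have "f ` opt1 x = nimber opt1 ` opt1 x" by auto
  moreover have "nimber opt1 x = mex (nimber opt1 ` opt1 x)"
    using node_game_pos[OF lose_first.prems] by (simp add: nimber_eq_mex)
  moreover have "nimber opt1 x = nimber opt2 y"
    using \<open>\<not> out (x, y)\<close> lose_first.prems by (simp add: node_out_iff)
  ultimately show ?case
    using first_edges by (simp add: answer_correct_def)
next
  case (win_move_first x y x' b n s)
  from win_move_first.hyps(2) win_move_first.prems have node': "(x', y) \<in> S"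
    by (simp split: if_splits)
  with win_move_first.hyps(3) have "nimber opt1 x' = nimber opt2 y"
    by (simp add: node_out_iff)
  moreover from win_move_first.hyps(1) have "nimber opt1 x \<noteq> nimber opt2 y"
    by (metis node_out_iff)
  ultimately show ?case
    using win_move_first.IH[OF node'] by (cases b) (simp_all add: answer_correct_def)
next
  case (win_move_second x y y' b n s)
  from win_move_second.hyps(2) win_move_second.prems have node': "(x, y') \<in> S"
    by (simp split: if_splits)
  with win_move_second.hyps(3) have "nimber opt1 x = nimber opt2 y'"
    by (simp add: node_out_iff)
  moreover from win_move_second.hyps(1) have "nimber opt1 x \<noteq> nimber opt2 y"
    by (metis node_out_iff)
  ultimately show ?case
    using win_move_second.IH[OF node'] by (cases b) (simp_all add: answer_correct_def)
qed

lemma tree_answer_exists: "(x, y) \<in> S \<Longrightarrow> \<exists>a. tree_answer is_win edges (x, y) a"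
proof -
  assume "(x, y) \<in> S"
  moreover from this have "game_pos opt1 x" "game_pos opt2 y"
    by (simp_all add: node_game_pos)
  then have "(x, y) \<in> S \<longrightarrow> (\<exists>a. tree_answer is_win edges (x, y) a)"
  proof (induction rule: game_pos_pair_induct)
    case (step x y)
    show ?case
    proof
      assume node: "(x, y) \<in> S"
      show "\<exists>a. tree_answer is_win edges (x, y) a"
      proof (cases "out (x, y)")
        case True
        from winning_node_move[OF node True] obtain a b
          where move: "(a, b) \<in> sum_opt opt1 opt2 (x, y)" "(a, b) \<in> S" "\<not> out (a, b)"
          by auto
        then consider "a \<in> opt1 x" "b = y" | "a = x" "b \<in> opt2 y"
          by (auto simp: Pair_in_sum_opt_iff)
        then show ?thesis
        proof cases
          case 1
          with move step(3)[OF 1(1)] obtain c n s where "tree_answer is_win edges (a, y) (c, n, s)"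
            by (auto simp: split_paired_Ex)
          then have "tree_answer is_win edges (x, y) (False, n, False)"
            by (rule win_move_first[rotated 3]) (use node True move 1 in simp_all)
          then show ?thesis ..
        next
          case 2
          with move step(4)[OF 2(2)] obtain c n s where "tree_answer is_win edges (x, b) (c, n, s)"
            by (auto simp: split_paired_Ex)
          then have "tree_answer is_win edges (x, y) (True, n, False)"
            by (rule win_move_second[rotated 3]) (use node True move 2 in simp_all)
          then show ?thesis ..
        qed
      next
        case False
        have first_edges: "{x'. (x', y) \<in> edges (x, y)} = opt1 x"
          by (rule losing_node_first_edges[OF node False])
        show ?thesis
        proof (cases "\<exists>x' n s. (x', y) \<in> edges (x, y) \<and> tree_answer is_win edges (x', y) (False, n, s)")
          case True
          then obtain x' n s
            where "(x', y) \<in> edges (x, y)" "tree_answer is_win edges (x', y) (False, n, s)"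
            by blast
          with False have "tree_answer is_win edges (x, y) (False, n, True)"
            by (intro lose_second) simp_all
          then show ?thesis ..
        next
          case no_second: False
          have "\<exists>n s. tree_answer is_win edges (x', y) (True, n, s)" if "(x', y) \<in> edges (x, y)" for x'
          proof -
            from that node have "(x', y) \<in> S"
              by (simp split: if_splits)
            moreover from that first_edges have "x' \<in> opt1 x"
              by blast
            ultimately obtain c n s where answer: "tree_answer is_win edges (x', y) (c, n, s)"
              using step(3)[of x'] by (auto simp: split_paired_Ex)
            have c
            proof (rule ccontr)
              assume "\<not> c"
              with that answer no_second show False
                by simp
            qed
            with answer show ?thesis
              by auto
          qed
          then have "\<forall>x'. \<exists>n. (x', y) \<in> edges (x, y) \<longrightarrow> (\<exists>s. tree_answer is_win edges (x', y) (True, n, s))"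
            by auto
          from choice[OF this] obtain f
            where "\<forall>x'. (x', y) \<in> edges (x, y) \<longrightarrow> (\<exists>s. tree_answer is_win edges (x', y) (True, f x', s))" ..
          with False have "tree_answer is_win edges (x, y) (True, mex (f ` {x'. (x', y) \<in> edges (x, y)}), True)"
            by (intro lose_first) simp_all
          then show ?thesis ..
        qed
      qed
    qed
  qed
  ultimately show ?thesis by blast
qed

end

theorem mainTheorem1:
  shows "\<exists>F :: 'a \<times> 'b \<Rightarrow> ('a \<times> 'b) set \<Rightarrow> ('a \<times> 'b \<Rightarrow> bool)
               \<Rightarrow> ('a \<times> 'b \<Rightarrow> ('a \<times> 'b) set) \<Rightarrow> bool \<times> nat \<times> bool.
    \<forall>(opt1 :: 'a \<Rightarrow> 'a set) (opt2 :: 'b \<Rightarrow> 'b set) P1 P2 S out.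
      game_pos opt1 P1 \<and> game_pos opt2 P2 \<and>
      solution_tree (sum_opt opt1 opt2) (P1, P2) S out \<longrightarrow>
      (case F (P1, P2) S (\<lambda>z. z \<in> S \<and> out z)
               (\<lambda>z. if z \<in> S then sum_opt opt1 opt2 z \<inter> S else {}) of
         (first, n, same) \<Rightarrow>
           (if first
            then nimber opt1 P1 = n \<and> (nimber opt2 P2 = n \<longleftrightarrow> same)
            else nimber opt2 P2 = n \<and> (nimber opt1 P1 = n \<longleftrightarrow> same)))"
proof (intro exI[of _ "\<lambda>root S is_win edges. SOME a. tree_answer is_win edges root a"] allI impI)
  fix opt1 :: "'a \<Rightarrow> 'a set" and opt2 :: "'b \<Rightarrow> 'b set" and P1 P2 S out
  assume "game_pos opt1 P1 \<and> game_pos opt2 P2 \<and> solution_tree (sum_opt opt1 opt2) (P1, P2) S out"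
  then interpret solved_sum opt1 opt2 P1 P2 S out
    by unfold_locales auto
  let ?a = "SOME a. tree_answer is_win edges (P1, P2) a"
  have "tree_answer is_win edges (P1, P2) ?a"
    using tree_answer_exists[OF root_in_tree] by (rule someI_ex)
  then have "answer_correct opt1 opt2 (P1, P2) ?a"
    using root_in_tree by (rule tree_answer_correct)
  then show "case ?a of (first, n, same) \<Rightarrow>
           (if first
            then nimber opt1 P1 = n \<and> (nimber opt2 P2 = n \<longleftrightarrow> same)
            else nimber opt2 P2 = n \<and> (nimber opt1 P1 = n \<longleftrightarrow> same))"
    by (auto simp: answer_correct_def split: prod.splits)
qed

end
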